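(* For every $n \in \mathbb{N}$, the SquaredEquality formula $EQ^2(n)$ has a QRAT refutation of size $\mathcal{O}(n^2)$.
   Context: A QBF is in closed prenex CNF form $Q.\phi$, where $Q = Q_1X_1\dots Q_kX_k$ is a quantifier prefix with $Q_i\in\{\exists,\forall\}$ and $\phi$ is a CNF (a set of clauses, each a disjunction of literals). For literals $\ell,k$, write $k \le_Q \ell$ if the variable of $k$ is quantified in a block at or to the left of the block of $\ell$. The $n$-th SquaredEquality formula is $EQ^2(n) := Q(n).eq^2(n)$ with prefix $Q(n) := \exists\{x_1,y_1,\dots,x_n,y_n\}\,\forall\{u_1,v_1,\dots,u_n,v_n\}\,\exists\{t_{i,j} : i,j\in[n]\}$ and matrix $eq^2(n)$ consisting of the clauses $\{x_i,y_j,u_i,v_j,t_{i,j}\}$, $\{x_i,\overline{y_j},u_i,\overline{v_j},t_{i,j}\}$, $\{\overline{x_i},y_j,\overline{u_i},v_j,t_{i,j}\}$, $\{\overline{x_i},\overline{y_j},\overline{u_i},\overline{v_j},t_{i,j}\}$ for all $i,j\in[n]$, together with the single clause $(\overline{t_{i,j}} : i,j\in[n])$ (the disjunction of all $\overline{t_{i,j}}$). QRAT proof system. Unit propagation on a CNF $F$: repeatedly, for a unit clause $(\ell)$, remove all clauses containing $\ell$ and delete $\overline{\ell}$ from all clauses, until no unit clause remains or the empty clause is derived. A clause $C$ is an asymmetric tautology (AT) w.r.t. $\phi$ (and w.r.t. $Q.\phi$) if unit propagation on $\phi \wedge \overline{C}$ (where $\overline{C}$ is the conjunction of the negations of the literals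 of $C$) derives the empty clause. For clauses $C\vee\ell$ and $D\vee\overline{\ell}$, the outer resolvent is $OR(Q,C,D,\ell) := C \cup \{k \in D : k \le_Q \ell\}$. A clause $C\vee \ell$ is a QRAT-clause on literal $\ell$ (and $\ell$ is a QRAT-literal in it) w.r.t. $Q.\phi$ if for every clause $D\vee\overline{\ell}\in\phi$ the outer resolvent $OR(Q,C,D,\ell)$ is an AT w.r.t. $\phi$. Extended inner clause $EIC(Q,C,\ell)$ for a universal $\ell\in C\in\phi$: repeatedly, for every existential literal $k$ of the current clause quantified to the right of $\ell$, add to the clause all literals quantified to the right of $\ell$ (and $\overline{\ell}$ if present) occurring in clauses $D\in\phi$ with $\overline{k}\in D$. A QRAT derivation from $Q.\phi$ is a sequence of modifications of the current formula, each being one of: adding a clause that is an AT or has an existential QRAT-literal w.r.t. the current formula (QRATA); deleting any clause; deleting a universal literal $\ell$ from a clause $C$ when $\ell$ is a QRAT-literal in $C$ (QRATU); deleting a universal literal $\ell$ from a clause $C$ when $\overline{\ell}\notin EIC(Q,C,\ell)$ (EUR). A QRAT refutation is such a derivation that produces the empty clause $\bot$; its size is the number of steps (equivalently, total size of the clauses produced). *)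

theory Defs
  imports Main
begin

datatype 'v lit = Pos 'v | Neg 'v

fun var :: "'v lit \<Rightarrow> 'v" where
  "var (Pos v) = v" | "var (Neg v) = v"

fun neg :: "'v lit \<Rightarrow> 'v lit" where
  "neg (Pos v) = Neg v" | "neg (Neg v) = Pos v"

type_synonym 'v clause = "'v lit set"
type_synonym 'v cnf = "'v clause set"

datatype quant = Exists | Forall

type_synonym 'v prefix = "(quant \<times> 'v set) list"

definition prefix_vars :: "'v prefix \<Rightarrow> 'v set" where
  "prefix_vars Q = (\<Union>b\<in>set Q. snd b)"

definition blk :: "'v prefix \<Rightarrow> 'v \<Rightarrow> nat" where
  "blk Q v = (LEAST i. i < length Q \<and> v \<in> snd (Q ! i))"

definition is_exist :: "'v prefix \<Rightarrow> 'v \<Rightarrow> bool" where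
  "is_exist Q v \<longleftrightarrow> v \<in> prefix_vars Q \<and> fst (Q ! blk Q v) = Exists"

definition is_univ :: "'v prefix \<Rightarrow> 'v \<Rightarrow> bool" where
  "is_univ Q v \<longleftrightarrow> v \<in> prefix_vars Q \<and> fst (Q ! blk Q v) = Forall"

definition leQ :: "'v prefix \<Rightarrow> 'v lit \<Rightarrow> 'v lit \<Rightarrow> bool" where
  "leQ Q k l \<longleftrightarrow> blk Q (var k) \<le> blk Q (var l)"

definition cnf_vars :: "'v cnf \<Rightarrow> 'v set" where
  "cnf_vars F = var ` (\<Union>F)"

definition assign_lit :: "'v cnf \<Rightarrow> 'v lit \<Rightarrow> 'v cnf" where
  "assign_lit F l = {C - {neg l} | C. C \<in> F \<and> l \<notin> C}"

inductive up_refutes :: "'v cnf \<Rightarrow> bool" where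
  empty: "{} \<in> F \<Longrightarrow> up_refutes F"
| unit: "{l} \<in> F \<Longrightarrow> up_refutes (assign_lit F l) \<Longrightarrow> up_refutes F"

definition neg_clause :: "'v clause \<Rightarrow> 'v cnf" where
  "neg_clause C = {{neg l} | l. l \<in> C}"

definition AT :: "'v cnf \<Rightarrow> 'v clause \<Rightarrow> bool" where
  "AT F C \<longleftrightarrow> up_refutes (F \<union> neg_clause C)"

definition outer_res :: "'v prefix \<Rightarrow> 'v clause \<Rightarrow> 'v clause \<Rightarrow> 'v lit \<Rightarrow> 'v clause" where
  "outer_res Q C D l = C \<union> {k \<in> D. leQ Q k l}"

definition qrat_lit :: "'v prefix \<Rightarrow> 'v cnf \<Rightarrow> 'v clause \<Rightarrow> 'v lit \<Rightarrow> bool" where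
  "qrat_lit Q F C' l \<longleftrightarrow> l \<in> C' \<and>
     (\<forall>D'\<in>F. neg l \<in> D' \<longrightarrow> AT F (outer_res Q (C' - {l}) (D' - {neg l}) l))"

inductive_set EIC :: "'v prefix \<Rightarrow> 'v cnf \<Rightarrow> 'v clause \<Rightarrow> 'v lit \<Rightarrow> 'v lit set"
  for Q F C l where
  base: "k \<in> C \<Longrightarrow> k \<in> EIC Q F C l"
| step: "\<lbrakk> k \<in> EIC Q F C l; is_exist Q (var k); blk Q (var k) > blk Q (var l);
           D \<in> F; neg k \<in> D; m \<in> D; blk Q (var m) > blk Q (var l) \<or> m = neg l \<rbrakk>
         \<Longrightarrow> m \<in> EIC Q F C l"

inductive qrat_step :: "'v prefix \<Rightarrow> 'v cnf \<Rightarrow> 'v cnf \<Rightarrow> bool" for Q where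
  QRATA: "\<lbrakk> finite C; var ` C \<subseteq> prefix_vars Q;
            AT F C \<or> (\<exists>l\<in>C. is_exist Q (var l) \<and> qrat_lit Q F C l) \<rbrakk>
          \<Longrightarrow> qrat_step Q F (F \<union> {C})"
| Delete: "C \<in> F \<Longrightarrow> qrat_step Q F (F - {C})"
| QRATU: "\<lbrakk> C \<in> F; l \<in> C; is_univ Q (var l); qrat_lit Q F C l \<rbrakk>
          \<Longrightarrow> qrat_step Q F ((F - {C}) \<union> {C - {l}})"
| EUR: "\<lbrakk> C \<in> F; l \<in> C; is_univ Q (var l); neg l \<notin> EIC Q F C l \<rbrakk>
          \<Longrightarrow> qrat_step Q F ((F - {C}) \<union> {C - {l}})"

definition qrat_refutation :: "'v prefix \<Rightarrow> 'v cnf \<Rightarrow> 'v cnf list \<Rightarrow> bool" where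
  "qrat_refutation Q F Fs \<longleftrightarrow> Fs \<noteq> [] \<and> hd Fs = F \<and>
     (\<forall>i. Suc i < length Fs \<longrightarrow> qrat_step Q (Fs ! i) (Fs ! Suc i)) \<and>
     {} \<in> last Fs"

definition refutation_size :: "'v cnf list \<Rightarrow> nat" where
  "refutation_size Fs = length Fs - 1"

datatype eqvar = X nat | Y nat | U nat | V nat | T nat nat

definition eq2_prefix :: "nat \<Rightarrow> eqvar prefix" where
  "eq2_prefix n =
    [ (Exists, {X i | i. i \<in> {1..n}} \<union> {Y i | i. i \<in> {1..n}}),
      (Forall, {U i | i. i \<in> {1..n}} \<union> {V i | i. i \<in> {1..n}}),
      (Exists, {T i j | i j. i \<in> {1..n} \<and> j \<in> {1..n}}) ]"

definition eq2_matrix :: "nat \<Rightarrow> eqvar cnf" where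
  "eq2_matrix n =
    (\<Union>i\<in>{1..n}. \<Union>j\<in>{1..n}.
      { {Pos (X i), Pos (Y j), Pos (U i), Pos (V j), Pos (T i j)},
        {Pos (X i), Neg (Y j), Pos (U i), Neg (V j), Pos (T i j)},
        {Neg (X i), Pos (Y j), Neg (U i), Pos (V j), Pos (T i j)},
        {Neg (X i), Neg (Y j), Neg (U i), Neg (V j), Pos (T i j)} })
    \<union> { {Neg (T i j) | i j. i \<in> {1..n} \<and> j \<in> {1..n}} }"

end

theory Submission
  imports Defs
begin

text \<open>Each universal literal \<open>u\<^sub>i\<close> can be dropped from every clause by QRATU: every clause
  containing its complement also contains the complement of the \<open>x\<^sub>i\<close>-literal that accompanies
  it, so every outer resolvent on it is a tautology in \<open>x\<^sub>i\<close>; likewise \<open>v\<^sub>j\<close> with \<open>y\<^sub>j\<close>.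
  This leaves the clauses \<open>x\<^sub>i\<^sup>a \<or> y\<^sub>j\<^sup>b \<or> t\<^sub>i\<^sub>j\<close>. Resolving away \<open>y\<^sub>j\<close> and then
  \<open>x\<^sub>i\<close> yields the units \<open>t\<^sub>i\<^sub>j\<close>, each resolvent being an asymmetric tautology, and unit
  propagation on these units falsifies the clause of all \<open>\<not>t\<^sub>i\<^sub>j\<close>. This takes
  \<open>4n\<^sup>2 + 4n\<^sup>2 + 2n\<^sup>2 + n\<^sup>2 + 1\<close> steps.\<close>

fun lit_of :: "bool \<Rightarrow> 'v \<Rightarrow> 'v lit" where
  "lit_of True v = Pos v"
| "lit_of False v = Neg v"

lemma var_lit_of [simp]: "var (lit_of a v) = v"
  by (cases a) auto

lemma neg_lit_of [simp]: "neg (lit_of a v) = lit_of (\<not> a) v"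
  by (cases a) auto

lemma lit_of_eq_iff [simp]: "lit_of a v = lit_of b w \<longleftrightarrow> a = b \<and> v = w"
  by (cases a; cases b) auto

lemma lit_of_eq_Pos_iff [simp]:
  "lit_of a v = Pos w \<longleftrightarrow> a \<and> v = w" "Pos w = lit_of a v \<longleftrightarrow> a \<and> v = w"
  by (cases a; auto)+

lemma lit_of_eq_Neg_iff [simp]:
  "lit_of a v = Neg w \<longleftrightarrow> \<not> a \<and> v = w" "Neg w = lit_of a v \<longleftrightarrow> \<not> a \<and> v = w"
  by (cases a; auto)+

lemma var_neg [simp]: "var (neg l) = var l"
  by (cases l) auto

lemma neg_neg [simp]: "neg (neg l) = l"
  by (cases l) auto

lemma neg_eq_iff [simp]: "neg k = neg l \<longleftrightarrow> k = l"
  by (metis neg_neg)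

lemma neg_neq_self [simp]: "neg l \<noteq> l" "l \<noteq> neg l"
  by (cases l; simp)+

lemma assign_litI: "C \<in> F \<Longrightarrow> l \<notin> C \<Longrightarrow> C - {neg l} \<in> assign_lit F l"
  unfolding assign_lit_def by blast

lemma singleton_mem_neg_clause: "l \<in> C \<Longrightarrow> {neg l} \<in> neg_clause C"
  unfolding neg_clause_def by blast

text \<open>\<open>unit_chain F A ls\<close> certifies a unit propagation run: the literals of \<open>A\<close> are
  already assigned true, each literal of \<open>ls\<close> in turn is forced by some clause of \<open>F\<close>, and
  finally some clause of \<open>F\<close> is falsified.\<close>

fun unit_chain :: "'v cnf \<Rightarrow> 'v lit set \<Rightarrow> 'v lit list \<Rightarrow> bool" where
  "unit_chain F A [] \<longleftrightarrow> (\<exists>C\<in>F. C \<subseteq> neg ` A)"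
| "unit_chain F A (l # ls) \<longleftrightarrow> (\<exists>C\<in>F. C \<subseteq> insert l (neg ` A)) \<and> unit_chain F (insert l A) ls"

lemma unit_chain_assign_lit:
  assumes "unit_chain F (insert l A) ls" "l \<notin> set ls" "neg l \<notin> A \<union> set ls"
  shows "unit_chain (assign_lit F l) A ls"
  using assms
proof (induction ls arbitrary: A)
  case Nil
  then obtain C where C: "C \<in> F" "C \<subseteq> neg ` insert l A" by auto
  have "l \<notin> neg ` insert l A"
    using Nil.prems(3) by (auto simp: image_iff)
  with C have "C - {neg l} \<in> assign_lit F l" by (intro assign_litI) auto
  moreover have "C - {neg l} \<subseteq> neg ` A" using C by auto
  ultimately show ?case by auto
next
  case (Cons m ms)
  then obtain C where C: "C \<in> F" "C \<subseteq> insert m (neg ` insert l A)" by auto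
  have "l \<notin> insert m (neg ` insert l A)"
    using Cons.prems(2,3) by (auto simp: image_iff)
  with C have "C - {neg l} \<in> assign_lit F l" by (intro assign_litI) auto
  moreover have "C - {neg l} \<subseteq> insert m (neg ` A)" using C by auto
  ultimately have "\<exists>C\<in>assign_lit F l. C \<subseteq> insert m (neg ` A)" by blast
  moreover have "unit_chain (assign_lit F l) (insert m A) ms"
    using Cons by (intro Cons.IH) (auto simp: insert_commute)
  ultimately show ?case by simp
qed

lemma up_refutes_unit_chain:
  assumes "unit_chain F {} ls" "distinct ls" "\<forall>l\<in>set ls. neg l \<notin> set ls"
  shows "up_refutes F"
  using assms
proof (induction ls arbitrary: F)
  case Nil
  then show ?case by (auto intro: up_refutes.empty)
next
  case (Cons l ls)
  then obtain C where C: "C \<in> F" "C \<subseteq> {l}" by auto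
  show ?case
  proof (cases "C = {}")
    case True
    with C show ?thesis by (auto intro: up_refutes.empty)
  next
    case False
    with C have "{l} \<in> F" by (metis subset_singletonD)
    moreover have "up_refutes (assign_lit F l)"
      using Cons by (intro Cons.IH unit_chain_assign_lit) auto
    ultimately show ?thesis by (rule up_refutes.unit)
  qed
qed

lemma unit_chain_append_units:
  "\<forall>l\<in>set ls. {l} \<in> F \<Longrightarrow> unit_chain F (A \<union> set ls) ms \<Longrightarrow> unit_chain F A (ls @ ms)"
  by (induction ls arbitrary: A) auto

lemma up_refutes_units:
  assumes "finite L" "\<forall>l\<in>L. {l} \<in> F" "D \<in> F" "D \<subseteq> neg ` L" "\<forall>l\<in>L. neg l \<notin> L"
  shows "up_refutes F"
proof -
  obtain ls where ls: "set ls = L" "distinct ls"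
    using finite_distinct_list[OF assms(1)] by blast
  have "unit_chain F {} (ls @ [])"
    using assms ls by (intro unit_chain_append_units) auto
  with ls assms(5) show ?thesis by (intro up_refutes_unit_chain) auto
qed

lemma AT_tautology:
  assumes "l \<in> C" "neg l \<in> C"
  shows "AT F C"
proof -
  have "unit_chain (F \<union> neg_clause C) {} [l]"
    using singleton_mem_neg_clause[OF assms(1)] singleton_mem_neg_clause[OF assms(2)]
    by force
  then show ?thesis unfolding AT_def by (rule up_refutes_unit_chain) auto
qed

lemma AT_resolvent:
  assumes "finite C" "insert l C \<in> F" "insert (neg l) C \<in> F"
    and "var l \<notin> var ` C" "\<forall>k\<in>C. neg k \<notin> C"
  shows "AT F C"
proof -
  obtain cs where cs: "set cs = C" "distinct cs"
    using finite_distinct_list[OF assms(1)] by blast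
  let ?G = "F \<union> neg_clause C"
  have "unit_chain ?G (neg ` C) [l]"
    using assms(2,3) by (auto simp: image_image)
  then have "unit_chain ?G {} (map neg cs @ [l])"
    using cs by (intro unit_chain_append_units) (auto intro: singleton_mem_neg_clause)
  moreover have "distinct (map neg cs @ [l])"
    using cs assms(4) by (auto simp: distinct_map inj_on_def)
  moreover have "\<forall>k\<in>set (map neg cs @ [l]). neg k \<notin> set (map neg cs @ [l])"
    using cs assms(4,5) by (auto simp: image_iff)
  ultimately show ?thesis unfolding AT_def by (rule up_refutes_unit_chain)
qed

text \<open>Every outer resolvent on \<open>l\<close> contains both \<open>k\<close> and \<open>neg k\<close>.\<close>

lemma qrat_step_univ_reduction:
  assumes "C \<in> F" "l \<in> C" "is_univ Q (var l)" "k \<in> C - {l}" "leQ Q k l"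
    and "\<forall>D\<in>F. neg l \<in> D \<longrightarrow> neg k \<in> D"
  shows "qrat_step Q F (F - {C} \<union> {C - {l}})"
proof (rule qrat_step.QRATU)
  show "qrat_lit Q F C l"
    unfolding qrat_lit_def
  proof (intro conjI ballI impI)
    fix D assume "D \<in> F" "neg l \<in> D"
    then have "neg k \<in> outer_res Q (C - {l}) (D - {neg l}) l"
      using assms(4-6) by (auto simp: outer_res_def leQ_def)
    moreover have "k \<in> outer_res Q (C - {l}) (D - {neg l}) l"
      using assms(4) by (simp add: outer_res_def)
    ultimately show "AT F (outer_res Q (C - {l}) (D - {neg l}) l)"
      by (rule AT_tautology[rotated])
  qed (rule assms(2))
qed (use assms in auto)

lemma relpowp_card_steps:
  assumes "finite I"
    and "\<And>q S. q \<in> I \<Longrightarrow> q \<notin> S \<Longrightarrow> S \<subseteq> I \<Longrightarrow> (R ^^ k) (G S) (G (insert q S))"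
  shows "(R ^^ (k * card I)) (G {}) (G I)"
proof -
  have "(R ^^ (k * card S)) (G {}) (G S)" if "S \<subseteq> I" for S
    using finite_subset[OF that assms(1)] that
  proof (induction S rule: finite_induct)
    case empty
    show ?case by simp
  next
    case (insert q S)
    then have "(R ^^ (k * card S) OO R ^^ k) (G {}) (G (insert q S))"
      using assms(2) by blast
    then show ?case
      using insert by (simp add: relpowp_add[symmetric] add.commute)
  qed
  then show ?thesis by blast
qed

lemma qratu_round:
  assumes "finite I" "inj_on f I"
    and fresh: "\<And>q D. q \<in> I \<Longrightarrow> D \<in> g ` I \<union> R \<Longrightarrow> u q \<notin> D"
    and reduct: "\<And>q. q \<in> I \<Longrightarrow> u q \<in> f q \<and> g q = f q - {u q} \<and>
      is_univ Q (var (u q)) \<and> k q \<in> g q \<and> leQ Q (k q) (u q)"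
    and partner: "\<And>q D. q \<in> I \<Longrightarrow> D \<in> f ` I \<union> g ` I \<union> R \<Longrightarrow>
      neg (u q) \<in> D \<Longrightarrow> neg (k q) \<in> D"
  shows "(qrat_step Q ^^ card I) (f ` I \<union> R) (g ` I \<union> R)"
proof -
  let ?G = "\<lambda>S. f ` (I - S) \<union> g ` S \<union> R"
  have "qrat_step Q (?G S) (?G (insert q S))" if "q \<in> I" "q \<notin> S" "S \<subseteq> I" for q S
  proof -
    have "f q \<notin> f ` (I - insert q S)"
      using assms(2) that(1) by (auto simp: inj_on_image_mem_iff)
    moreover have "f q \<notin> g ` S \<union> R"
      using fresh[OF that(1)] reduct[OF that(1)] that(3) by blast
    ultimately have "?G S - {f q} \<union> {f q - {u q}} = ?G (insert q S)"
      using reduct[OF that(1)] that by auto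
    moreover have "qrat_step Q (?G S) (?G S - {f q} \<union> {f q - {u q}})"
    proof (rule qrat_step_univ_reduction)
      show "\<forall>D\<in>?G S. neg (u q) \<in> D \<longrightarrow> neg (k q) \<in> D"
        using partner[OF that(1)] that(3) by blast
    qed (use reduct[OF that(1)] that in auto)
    ultimately show ?thesis by simp
  qed
  then have "(qrat_step Q ^^ (1 * card I)) (?G {}) (?G I)"
    using assms(1) by (intro relpowp_card_steps) auto
  then show ?thesis by simp
qed

lemma qrata_round:
  assumes "finite J"
    and "\<And>q. q \<in> J \<Longrightarrow> finite (h q) \<and> var ` h q \<subseteq> prefix_vars Q"
    and "\<And>q G. q \<in> J \<Longrightarrow> F \<subseteq> G \<Longrightarrow> AT G (h q)"
  shows "(qrat_step Q ^^ card J) F (F \<union> h ` J)"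
proof -
  have "qrat_step Q (F \<union> h ` S) (F \<union> h ` insert q S)" if "q \<in> J" for q S
  proof -
    have "qrat_step Q (F \<union> h ` S) (F \<union> h ` S \<union> {h q})"
      using assms(2,3)[OF that] by (intro qrat_step.QRATA) auto
    then show ?thesis by (simp add: insert_commute)
  qed
  then have "(qrat_step Q ^^ (1 * card J)) (F \<union> h ` {}) (F \<union> h ` J)"
    using assms(1) by (intro relpowp_card_steps) auto
  then show ?thesis by simp
qed

lemma qrat_refutation_of_relpowp:
  assumes "(qrat_step Q ^^ m) F G" "{} \<in> G"
  shows "\<exists>Fs. qrat_refutation Q F Fs \<and> refutation_size Fs = m"
proof -
  obtain f where f: "f 0 = F" "f m = G" "\<forall>i<m. qrat_step Q (f i) (f (Suc i))"
    using assms(1) by (auto simp: relpowp_fun_conv)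
  have "qrat_refutation Q F (map f [0..<Suc m])"
    using f assms(2) by (auto simp: qrat_refutation_def hd_map last_map simp del: upt_Suc)
  moreover have "refutation_size (map f [0..<Suc m]) = m"
    by (simp add: refutation_size_def)
  ultimately show ?thesis by blast
qed

lemma mem_eq2_prefix_vars [simp]:
  "X i \<in> prefix_vars (eq2_prefix n) \<longleftrightarrow> i \<in> {1..n}"
  "Y i \<in> prefix_vars (eq2_prefix n) \<longleftrightarrow> i \<in> {1..n}"
  "U i \<in> prefix_vars (eq2_prefix n) \<longleftrightarrow> i \<in> {1..n}"
  "V i \<in> prefix_vars (eq2_prefix n) \<longleftrightarrow> i \<in> {1..n}"
  "T i j \<in> prefix_vars (eq2_prefix n) \<longleftrightarrow> i \<in> {1..n} \<and> j \<in> {1..n}"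
  unfolding prefix_vars_def eq2_prefix_def by auto

lemma blk_eq2_prefix:
  assumes "i \<in> {1..n}"
  shows "blk (eq2_prefix n) (X i) = 0" "blk (eq2_prefix n) (Y i) = 0"
    "blk (eq2_prefix n) (U i) = 1" "blk (eq2_prefix n) (V i) = 1"
  using assms unfolding blk_def eq2_prefix_def
  by (auto intro!: Least_equality simp: less_Suc_eq)

lemma is_univ_eq2_prefix:
  assumes "i \<in> {1..n}"
  shows "is_univ (eq2_prefix n) (U i)" "is_univ (eq2_prefix n) (V i)"
  using assms blk_eq2_prefix[OF assms]
  by (auto simp: is_univ_def) (simp_all add: eq2_prefix_def)

fun xyuvt :: "nat \<times> nat \<times> bool \<times> bool \<Rightarrow> eqvar clause" where
  "xyuvt (i, j, a, b) = {lit_of a (X i), lit_of b (Y j), lit_of a (U i), lit_of b (V j), Pos (T i j)}"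

fun xyvt :: "nat \<times> nat \<times> bool \<times> bool \<Rightarrow> eqvar clause" where
  "xyvt (i, j, a, b) = {lit_of a (X i), lit_of b (Y j), lit_of b (V j), Pos (T i j)}"

fun xyt :: "nat \<times> nat \<times> bool \<times> bool \<Rightarrow> eqvar clause" where
  "xyt (i, j, a, b) = {lit_of a (X i), lit_of b (Y j), Pos (T i j)}"

fun xt :: "nat \<times> nat \<times> bool \<Rightarrow> eqvar clause" where
  "xt (i, j, a) = {lit_of a (X i), Pos (T i j)}"

fun t_unit :: "nat \<times> nat \<Rightarrow> eqvar clause" where
  "t_unit (i, j) = {Pos (T i j)}"

definition neg_ts :: "nat \<Rightarrow> eqvar clause" where
  "neg_ts n = {Neg (T i j) | i j. i \<in> {1..n} \<and> j \<in> {1..n}}"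

lemma inj_xyuvt: "inj xyuvt"
proof (rule injI)
  fix p q assume eq: "xyuvt p = xyuvt q"
  obtain i j a b i' j' a' b' where p: "p = (i, j, a, b)" and q: "q = (i', j', a', b')"
    by (cases p; cases q) auto
  have "{lit_of a (U i), lit_of b (V j)} \<subseteq> xyuvt p" using p by simp
  then have "{lit_of a (U i), lit_of b (V j)} \<subseteq> xyuvt q" using eq by simp
  then show "p = q" using p q by simp
qed

lemma inj_xyvt: "inj xyvt"
proof (rule injI)
  fix p q assume eq: "xyvt p = xyvt q"
  obtain i j a b i' j' a' b' where p: "p = (i, j, a, b)" and q: "q = (i', j', a', b')"
    by (cases p; cases q) auto
  have "{lit_of a (X i), lit_of b (V j)} \<subseteq> xyvt p" using p by simp
  then have "{lit_of a (X i), lit_of b (V j)} \<subseteq> xyvt q" using eq by simp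
  then show "p = q" using p q by simp
qed

abbreviation eq2_index :: "nat \<Rightarrow> (nat \<times> nat \<times> bool \<times> bool) set" where
  "eq2_index n \<equiv> {1..n} \<times> {1..n} \<times> UNIV \<times> UNIV"

lemma eq2_matrix_eq: "eq2_matrix n = xyuvt ` eq2_index n \<union> {neg_ts n}"
proof -
  have "xyuvt ` eq2_index n = (\<Union>i\<in>{1..n}. \<Union>j\<in>{1..n}. xyuvt ` ({i} \<times> {j} \<times> UNIV \<times> UNIV))"
    by auto
  also have "\<dots> = (\<Union>i\<in>{1..n}. \<Union>j\<in>{1..n}.
      { {Pos (X i), Pos (Y j), Pos (U i), Pos (V j), Pos (T i j)},
        {Pos (X i), Neg (Y j), Pos (U i), Neg (V j), Pos (T i j)},
        {Neg (X i), Pos (Y j), Neg (U i), Pos (V j), Pos (T i j)},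
        {Neg (X i), Neg (Y j), Neg (U i), Neg (V j), Pos (T i j)} })"
    by (simp add: UNIV_bool insert_commute)
  finally show ?thesis unfolding eq2_matrix_def neg_ts_def by simp
qed

lemma eq2_remove_U:
  "(qrat_step (eq2_prefix n) ^^ card (eq2_index n))
     (xyuvt ` eq2_index n \<union> {neg_ts n}) (xyvt ` eq2_index n \<union> {neg_ts n})"
  by (rule qratu_round[where u = "\<lambda>(i, j, a, b). lit_of a (U i)"
                         and k = "\<lambda>(i, j, a, b). lit_of a (X i)"])
    (auto simp: inj_on_subset[OF inj_xyuvt] neg_ts_def blk_eq2_prefix is_univ_eq2_prefix leQ_def)

lemma eq2_remove_V:
  "(qrat_step (eq2_prefix n) ^^ card (eq2_index n))
     (xyvt ` eq2_index n \<union> {neg_ts n}) (xyt ` eq2_index n \<union> {neg_ts n})"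
  by (rule qratu_round[where u = "\<lambda>(i, j, a, b). lit_of b (V j)"
                         and k = "\<lambda>(i, j, a, b). lit_of b (Y j)"])
    (auto simp: inj_on_subset[OF inj_xyvt] neg_ts_def blk_eq2_prefix is_univ_eq2_prefix leQ_def)

lemma eq2_add_xt:
  assumes "xyt ` eq2_index n \<subseteq> F"
  shows "(qrat_step (eq2_prefix n) ^^ card ({1..n} \<times> {1..n} \<times> (UNIV :: bool set)))
    F (F \<union> xt ` ({1..n} \<times> {1..n} \<times> UNIV))"
proof (rule qrata_round)
  fix q G assume q: "q \<in> {1..n} \<times> {1..n} \<times> (UNIV :: bool set)" and G: "F \<subseteq> G"
  obtain i j a where q_eq: "q = (i, j, a)" by (cases q) auto
  have "xyt (i, j, a, b) \<in> G" for b
  proof -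
    have "(i, j, a, b) \<in> eq2_index n" using q q_eq by simp
    then show ?thesis using assms G by blast
  qed
  from this[of True] this[of False]
  have "insert (Pos (Y j)) (xt q) \<in> G" "insert (neg (Pos (Y j))) (xt q) \<in> G"
    using q_eq by (simp_all add: insert_commute)
  then show "AT G (xt q)"
    by (rule AT_resolvent[rotated]) (auto simp: q_eq)
qed auto

lemma eq2_add_t_units:
  assumes "xt ` ({1..n} \<times> {1..n} \<times> UNIV) \<subseteq> F"
  shows "(qrat_step (eq2_prefix n) ^^ card ({1..n} \<times> {1..n})) F (F \<union> t_unit ` ({1..n} \<times> {1..n}))"
proof (rule qrata_round)
  fix q G assume q: "q \<in> {1..n} \<times> {1..n}" and G: "F \<subseteq> G"
  obtain i j where q_eq: "q = (i, j)" by (cases q) auto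
  have "xt (i, j, a) \<in> G" for a
  proof -
    have "(i, j, a) \<in> {1..n} \<times> {1..n} \<times> UNIV" using q q_eq by simp
    then show ?thesis using assms G by blast
  qed
  from this[of True] this[of False]
  have "insert (Pos (X i)) (t_unit q) \<in> G" "insert (neg (Pos (X i))) (t_unit q) \<in> G"
    using q_eq by simp_all
  then show "AT G (t_unit q)"
    by (rule AT_resolvent[rotated]) (auto simp: q_eq)
qed auto

lemma eq2_add_empty:
  assumes "t_unit ` ({1..n} \<times> {1..n}) \<subseteq> F" "neg_ts n \<in> F"
  shows "qrat_step (eq2_prefix n) F (F \<union> {{}})"
proof (rule qrat_step.QRATA)
  have "up_refutes F"
  proof (rule up_refutes_units)
    let ?L = "(\<lambda>(i, j). Pos (T i j)) ` ({1..n} \<times> {1..n})"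
    show "finite ?L" by simp
    show "\<forall>l\<in>?L. {l} \<in> F" using assms(1) by (force simp: image_subset_iff)
    show "neg_ts n \<subseteq> neg ` ?L" by (force simp: neg_ts_def)
  qed (use assms(2) in auto)
  then show "AT F {} \<or> (\<exists>l\<in>{}. is_exist (eq2_prefix n) (var l) \<and> qrat_lit (eq2_prefix n) F {} l)"
    by (simp add: AT_def neg_clause_def)
qed auto

lemma eq2_qrat_refutation:
  "\<exists>Fs. qrat_refutation (eq2_prefix n) (eq2_matrix n) Fs \<and> refutation_size Fs = 11 * n\<^sup>2 + 1"
proof -
  let ?R = "qrat_step (eq2_prefix n)"
  let ?I = "eq2_index n" and ?J = "{1..n} \<times> {1..n} \<times> (UNIV :: bool set)" and ?P = "{1..n} \<times> {1..n}"
  let ?F2 = "xyt ` ?I \<union> {neg_ts n}"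
  let ?F3 = "?F2 \<union> xt ` ?J"
  let ?F4 = "?F3 \<union> t_unit ` ?P"
  have "(?R ^^ card ?I) (eq2_matrix n) (xyvt ` ?I \<union> {neg_ts n})"
    using eq2_remove_U by (simp add: eq2_matrix_eq)
  moreover have "(?R ^^ card ?I) (xyvt ` ?I \<union> {neg_ts n}) ?F2"
    by (rule eq2_remove_V)
  moreover have "(?R ^^ card ?J) ?F2 ?F3"
    by (rule eq2_add_xt) auto
  moreover have "(?R ^^ card ?P) ?F3 ?F4"
    by (rule eq2_add_t_units) auto
  moreover have "(?R ^^ 1) ?F4 (?F4 \<union> {{}})"
    using eq2_add_empty[of n ?F4] by auto
  ultimately have "(?R ^^ (card ?I + card ?I + card ?J + card ?P + 1)) (eq2_matrix n) (?F4 \<union> {{}})"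
    unfolding relpowp_add by (meson relcomppI)
  moreover have "card ?I + card ?I + card ?J + card ?P + 1 = 11 * n\<^sup>2 + 1"
    by (simp add: card_cartesian_product power2_eq_square del: UNIV_Times_UNIV)
  ultimately show ?thesis
    by (intro qrat_refutation_of_relpowp) auto
qed

theorem theorem8:
  shows "\<exists>c::nat. \<forall>n::nat. \<exists>Fs.
           qrat_refutation (eq2_prefix n) (eq2_matrix n) Fs \<and>
           refutation_size Fs \<le> c * n\<^sup>2"
proof (intro exI[of _ 12] allI)
  fix n :: nat
  show "\<exists>Fs. qrat_refutation (eq2_prefix n) (eq2_matrix n) Fs \<and> refutation_size Fs \<le> 12 * n\<^sup>2"
  proof (cases "n = 0")
    case True
    \<comment> \<open>then the clause of all \<open>\<not>t\<^sub>i\<^sub>j\<close> is empty\<close>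
    then have "qrat_refutation (eq2_prefix n) (eq2_matrix n) [eq2_matrix n]"
      by (simp add: qrat_refutation_def eq2_matrix_eq neg_ts_def)
    then show ?thesis by (auto simp: refutation_size_def)
  next
    case False
    then have "11 * n\<^sup>2 + 1 \<le> 12 * n\<^sup>2" by simp
    with eq2_qrat_refutation[of n] show ?thesis by fastforce
  qed
qed

end
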